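(* Let $d\in\{2,3\}$, $R>0$, and let $m_\pm>0$, $\rho_\pm>0$, $\alpha>0$, $S_I\in\mathbb{R}$ be given, with $\lambda_\pm=\sqrt{\rho_\pm/m_\pm}$. For $q\in(0,R)$ define \[ \mathcal H(q)=-m_+\lambda_+\Big(\alpha\frac{d-1}{q}-\frac{S_+}{\rho_+}\Big)\frac{\mathbb I_1(\lambda_+q)}{\mathbb I_0(\lambda_+q)} +m_-\lambda_-\Big(\alpha\frac{d-1}{q}-\frac{S_-}{\rho_-}\Big)\frac{\mathbb I_1(\lambda_-q)\frac{\mathbb K_1(\lambda_-R)}{\mathbb I_1(\lambda_-R)}-\mathbb K_1(\lambda_-q)}{\mathbb I_0(\lambda_-q)\frac{\mathbb K_1(\lambda_-R)}{\mathbb I_1(\lambda_-R)}+\mathbb K_0(\lambda_-q)}+S_I . \] Then there exist a constant $d_{+,*}<0$ which does not depend on $\frac{S_+}{\rho_+}$ and $\frac{S_-}{\rho_-}$, and a constant $d_{-,*}>0$ which does not depend on $\frac{S_-}{\rho_-}$, such that for all $\frac{S_+}{\rho_+}<d_{+,*}$ and $\frac{S_-}{\rho_-}>d_{-,*}$ the function $\mathcal H$ has at least two distinct roots in $(0,R)$. Furthermore, at least one root is unstable with respect to radial perturbations, while at least one other root is stable with respect to radial perturbations. If $\mathcal H$ has exactly two roots, then the smaller root is unstable and the larger one is stable.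
   Context: For $d=2$, $\mathbb I_j=I_j$ and $\mathbb K_j=K_j$ are the modified Bessel functions of the first and second kind of order $j$. For $d=3$, $\mathbb I_j=i_j$ and $\mathbb K_j=k_j$ are the spherical modified Bessel functions, in particular $i_0(r)=\sinh(r)/r$, $i_1(r)=(r\cosh r-\sinh r)/r^2$, $k_0(r)=e^{-r}/r$, $k_1(r)=e^{-r}(r+1)/r^2$. The function $\mathcal H$ arises as follows: radially symmetric solutions of the chemically active Mullins--Sekerka problem in the ball $B_R(0)\subset\mathbb R^d$ with droplet $\Omega^+(t)=B_{q(t)}(0)$ have radius evolving according to the ODE $2\dot q=\mathcal H(q)$. A root $q^\star$ of $\mathcal H$ is called stable (resp. unstable) with respect to radial perturbations if it is a stable (resp. unstable) equilibrium of the scalar ODE $2\dot q=\mathcal H(q)$. *)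

theory Defs
  imports "HOL-Analysis.Analysis"
begin

definition besselI :: "nat \<Rightarrow> real \<Rightarrow> real" where
  "besselI n x = (\<Sum>k. (x / 2) ^ (2 * k + n) / (fact k * fact (k + n)))"

definition besselK :: "nat \<Rightarrow> real \<Rightarrow> real" where
  "besselK n x = integral {0..} (\<lambda>t. exp (- x * cosh t) * cosh (real n * t))"

text \<open>Spherical modified Bessel functions of order 0 and 1 (only these orders are used).\<close>

definition sph_i :: "nat \<Rightarrow> real \<Rightarrow> real" where
  "sph_i j r = (if j = 0 then sinh r / r else (r * cosh r - sinh r) / r ^ 2)"

definition sph_k :: "nat \<Rightarrow> real \<Rightarrow> real" where
  "sph_k j r = (if j = 0 then exp (- r) / r else exp (- r) * (r + 1) / r ^ 2)"

text \<open>Dimension-dependent Bessel functions: d = 2 cylindrical, d = 3 spherical.\<close>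

definition BI :: "nat \<Rightarrow> nat \<Rightarrow> real \<Rightarrow> real" where
  "BI d j r = (if d = 2 then besselI j r else sph_i j r)"

definition BK :: "nat \<Rightarrow> nat \<Rightarrow> real \<Rightarrow> real" where
  "BK d j r = (if d = 2 then besselK j r else sph_k j r)"

definition calH :: "nat \<Rightarrow> real \<Rightarrow> real \<Rightarrow> real \<Rightarrow> real \<Rightarrow> real \<Rightarrow> real \<Rightarrow> real
    \<Rightarrow> real \<Rightarrow> real \<Rightarrow> real \<Rightarrow> real" where
  "calH d R mp mm rhop rhom alpha SI Sp Sm q =
    (let lp = sqrt (rhop / mp); lm = sqrt (rhom / mm);
         c = BK d 1 (lm * R) / BI d 1 (lm * R)
     in - mp * lp * (alpha * (real d - 1) / q - Sp / rhop) * (BI d 1 (lp * q) / BI d 0 (lp * q))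
        + mm * lm * (alpha * (real d - 1) / q - Sm / rhom)
            * ((BI d 1 (lm * q) * c - BK d 1 (lm * q)) / (BI d 0 (lm * q) * c + BK d 0 (lm * q)))
        + SI)"

definition radial_solution :: "(real \<Rightarrow> real) \<Rightarrow> real \<Rightarrow> (real \<Rightarrow> real) \<Rightarrow> real \<Rightarrow> bool" where
  "radial_solution H R q T \<longleftrightarrow> T > 0 \<and>
     (\<forall>t\<in>{0..<T}. q t \<in> {0<..<R} \<and> (q has_real_derivative (H (q t) / 2)) (at t within {0..<T}))"

definition ode_stable :: "(real \<Rightarrow> real) \<Rightarrow> real \<Rightarrow> real \<Rightarrow> bool" where
  "ode_stable H R qs \<longleftrightarrow> (\<forall>\<epsilon>>0. \<exists>\<delta>>0. \<forall>q T. radial_solution H R q T \<and> \<bar>q 0 - qs\<bar> < \<delta>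
       \<longrightarrow> (\<forall>t\<in>{0..<T}. \<bar>q t - qs\<bar> < \<epsilon>))"

definition ode_unstable :: "(real \<Rightarrow> real) \<Rightarrow> real \<Rightarrow> real \<Rightarrow> bool" where
  "ode_unstable H R qs \<longleftrightarrow> \<not> ode_stable H R qs"

end

(*
  Write H(q) = - m_+ lambda_+ (kappa/q - S_+/rho_+) f(q) + m_- lambda_- (kappa/q - S_-/rho_-) g(q) + S_I
  with kappa = alpha (d - 1), f = I_1/I_0 > 0 and g the quotient of the outer solution. The constant
  in g makes g(R) = 0, and since K_1 blows up at 0 while I_0, I_1 stay bounded, g <= -1/2 near 0.
  Hence H(R) < 0 as soon as S_+/rho_+ is negative enough, H < 0 near 0 for all sources, and H(p) > 0
  at a fixed small p once S_-/rho_- is large. This sign pattern yields two roots of the scalar ODE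
  2 q' = H(q): the last zero a before p, with H > 0 on (a, p], is unstable (separation of variables
  gives a solution that leaves every small neighbourhood of a), while b = sup {x in [p, R]. H x > 0}
  is stable, because H <= 0 on (b, R) and points with H > 0 arbitrarily close to the left of b act
  as barriers.
*)

theory Submission
  imports Defs "HOL-Real_Asymp.Real_Asymp"
begin

lemma exp_neg_le_cube: "(z::real) > 0 \<Longrightarrow> exp (- z) \<le> 27 / z ^ 3"
proof -
  assume z: "z > 0"
  have "(z / 3) ^ 3 \<le> exp (z / 3) ^ 3"
    using exp_ge_add_one_self[of "z / 3"] z by (intro power_mono) linarith+
  also have "exp (z / 3) ^ 3 = exp z"
    by (simp add: exp_of_nat_mult[symmetric])
  finally show ?thesis
    using z by (simp add: exp_minus power_divide field_simps)
qed

lemma exp_cosh_sq_le: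
  fixes x t :: real
  assumes "x > 0"
  shows "exp (- x * cosh t) * cosh t ^ 2 \<le> 54 / x ^ 3 * exp (- t)"
proof -
  have c1: "cosh t \<ge> 1" by (rule cosh_real_ge_1)
  have "exp (- x * cosh t) * cosh t ^ 2 \<le> 27 / (x * cosh t) ^ 3 * cosh t ^ 2"
    using exp_neg_le_cube[of "x * cosh t"] assms c1 by (intro mult_right_mono) auto
  also have "\<dots> = 27 / (x ^ 3 * cosh t)"
    using c1 assms by (simp add: field_simps power2_eq_square power3_eq_cube)
  also have "\<dots> \<le> 27 / (x ^ 3 * (exp t / 2))"
    using assms by (intro divide_left_mono mult_left_mono mult_pos_pos)
      (auto simp: cosh_def add_pos_pos)
  also have "\<dots> = 54 / x ^ 3 * exp (- t)"
    by (simp add: exp_minus field_simps)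
  finally show ?thesis .
qed

lemma integrable_exp_cosh_sq:
  fixes x :: real
  assumes "x > 0"
  shows "(\<lambda>t. exp (- x * cosh t) * cosh t ^ 2) integrable_on {0..}"
proof (rule measurable_bounded_by_integrable_imp_integrable_real)
  show "(\<lambda>t. exp (- x * cosh t) * cosh t ^ 2) \<in> borel_measurable (lebesgue_on {0..})"
    by (intro continuous_imp_measurable_on_sets_lebesgue continuous_intros) auto
  show "(\<lambda>t. 54 / x ^ 3 * exp (- t)) integrable_on {0..}"
    using integrable_on_cmult_left[OF integrable_on_exp_minus_to_infinity[of 1 0], of "54 / x ^ 3"]
    by simp
  show "\<bar>exp (- x * cosh t) * cosh t ^ 2\<bar> \<le> 54 / x ^ 3 * exp (- t)" for t
    using exp_cosh_sq_le[OF assms] by simp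
qed auto

lemma cosh_of_nat_le_1_bounds:
  fixes t :: real
  assumes "n \<le> 1"
  shows "1 \<le> cosh (real n * t)" "cosh (real n * t) \<le> cosh t"
  using assms by (auto simp: le_Suc_eq cosh_real_ge_1)

lemma besselK_integrable:
  fixes x :: real
  assumes "x > 0" "n \<le> 1"
  shows "(\<lambda>t. exp (- x * cosh t) * cosh (real n * t)) integrable_on {0..}"
proof (rule measurable_bounded_by_integrable_imp_integrable_real)
  show "(\<lambda>t. exp (- x * cosh t) * cosh (real n * t)) \<in> borel_measurable (lebesgue_on {0..})"
    by (intro continuous_imp_measurable_on_sets_lebesgue continuous_intros) auto
  show "\<bar>exp (- x * cosh t) * cosh (real n * t)\<bar> \<le> exp (- x * cosh t) * cosh t ^ 2" for t
  proof -
    have "cosh (real n * t) \<le> cosh t * cosh t"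
      using cosh_of_nat_le_1_bounds[OF assms(2), of t] cosh_real_ge_1[of t]
      by (smt (verit) mult_le_cancel_left1)
    then show ?thesis
      using cosh_of_nat_le_1_bounds(1)[OF assms(2), of t] by (simp add: abs_mult power2_eq_square)
  qed
qed (use integrable_exp_cosh_sq[OF assms(1)] in auto)

lemma besselK_lower_bound:
  fixes x b :: real
  assumes "x > 0" "b \<ge> 0" "n \<le> 1"
  shows "b * exp (- x * cosh b) \<le> besselK n x"
proof -
  let ?f = "\<lambda>t. exp (- x * cosh t) * cosh (real n * t)"
  have "b * exp (- x * cosh b) = integral {0..b} (\<lambda>t. exp (- x * cosh b))"
    using assms by simp
  also have "\<dots> \<le> integral {0..b} ?f"
  proof (rule integral_le)
    fix t assume t: "t \<in> {0..b}"
    have "exp (- x * cosh b) \<le> exp (- x * cosh t)"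
      using t assms by (simp add: cosh_real_nonneg_le_iff)
    also have "\<dots> \<le> ?f t"
      using cosh_of_nat_le_1_bounds(1)[OF assms(3), of t] by simp
    finally show "exp (- x * cosh b) \<le> ?f t" .
  qed (auto intro!: integrable_continuous_interval continuous_intros)
  also have "\<dots> \<le> integral {0..} ?f"
  proof (rule integral_subset_le)
    show "?f integrable_on {0..b}"
      by (intro integrable_continuous_interval continuous_intros)
  qed (use besselK_integrable[OF assms(1,3)] cosh_real_pos in auto)
  finally show ?thesis
    unfolding besselK_def by simp
qed

lemma besselK_pos: "x > 0 \<Longrightarrow> n \<le> 1 \<Longrightarrow> besselK n x > 0"
  using besselK_lower_bound[of x 1 n] by (smt (verit) exp_gt_zero)

lemma besselK_0_le_1: "x > 0 \<Longrightarrow> besselK 0 x \<le> besselK 1 x"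
  unfolding besselK_def
proof (rule integral_le)
  assume "x > 0"
  then show "(\<lambda>t. exp (- x * cosh t) * cosh (real 0 * t)) integrable_on {0..}"
    and "(\<lambda>t. exp (- x * cosh t) * cosh (real 1 * t)) integrable_on {0..}"
    using besselK_integrable[of x 0] besselK_integrable[of x 1] by simp_all
qed (simp add: cosh_real_ge_1)

lemma exp_neg_lipschitz:
  fixes a b m :: real
  assumes "m \<le> a" "m \<le> b"
  shows "\<bar>exp (- a) - exp (- b)\<bar> \<le> \<bar>a - b\<bar> * exp (- m)"
proof -
  have *: "exp (- a) - exp (- b) \<le> (b - a) * exp (- m)" if "a \<le> b" "m \<le> a" for a b
  proof -
    have "exp (- a) - exp (- b) = exp (- a) * (1 - exp (a - b))"
      by (simp add: exp_diff exp_minus field_simps)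
    also have "\<dots> \<le> exp (- a) * (b - a)"
      using exp_ge_add_one_self[of "a - b"] by (intro mult_left_mono) (auto simp: algebra_simps)
    also have "\<dots> \<le> exp (- m) * (b - a)"
      using that by (intro mult_right_mono) auto
    finally show ?thesis by (simp only: mult.commute)
  qed
  show ?thesis
    using *[of a b] *[of b a] assms by (cases "a \<le> b") (auto simp: abs_if)
qed

lemma besselK_lipschitz:
  fixes x y m :: real
  assumes "m > 0" "m \<le> x" "m \<le> y" "n \<le> 1"
  shows "\<bar>besselK n x - besselK n y\<bar>
    \<le> \<bar>x - y\<bar> * integral {0..} (\<lambda>t. exp (- m * cosh t) * cosh t ^ 2)"
proof -
  let ?k = "\<lambda>x t. exp (- x * cosh t) * cosh (real n * t)"
  have "besselK n x - besselK n y = integral {0..} (\<lambda>t. ?k x t - ?k y t)"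
    unfolding besselK_def using assms by (intro integral_diff[symmetric] besselK_integrable) auto
  also have "\<bar>\<dots>\<bar> \<le> integral {0..} (\<lambda>t. \<bar>x - y\<bar> * (exp (- m * cosh t) * cosh t ^ 2))"
  proof (subst real_norm_def[symmetric], rule integral_norm_bound_integral)
    show "(\<lambda>t. ?k x t - ?k y t) integrable_on {0..}"
      using assms by (intro integrable_diff besselK_integrable) auto
    show "(\<lambda>t. \<bar>x - y\<bar> * (exp (- m * cosh t) * cosh t ^ 2)) integrable_on {0..}"
      using integrable_on_cmult_left[OF integrable_exp_cosh_sq[OF assms(1)], of "\<bar>x - y\<bar>"] by simp
    fix t :: real
    have c1: "cosh t \<ge> 1" by (rule cosh_real_ge_1)
    note cn = cosh_of_nat_le_1_bounds[OF assms(4), of t]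
    have "\<bar>?k x t - ?k y t\<bar> = \<bar>exp (- (x * cosh t)) - exp (- (y * cosh t))\<bar> * cosh (real n * t)"
      using cn by (simp add: abs_mult left_diff_distrib[symmetric])
    also have "\<dots> \<le> (\<bar>x * cosh t - y * cosh t\<bar> * exp (- (m * cosh t))) * cosh t"
      using assms c1 cn
      by (intro mult_mono exp_neg_lipschitz) (auto intro: mult_right_mono)
    also have "\<dots> = \<bar>x - y\<bar> * (exp (- m * cosh t) * cosh t ^ 2)"
      using c1 by (simp add: abs_mult left_diff_distrib[symmetric] power2_eq_square)
    finally show "norm (?k x t - ?k y t) \<le> \<bar>x - y\<bar> * (exp (- m * cosh t) * cosh t ^ 2)"
      by simp
  qed
  finally show ?thesis by simp
qed

lemma isCont_besselK: "n \<le> 1 \<Longrightarrow> x0 > 0 \<Longrightarrow> isCont (besselK n) x0"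
proof -
  assume n: "n \<le> 1" and x0: "x0 > 0"
  define M where "M = integral {0..} (\<lambda>t. exp (- (x0 / 2) * cosh t) * cosh t ^ 2)"
  have "((\<lambda>x. besselK n x - besselK n x0) \<longlongrightarrow> 0) (at x0)"
  proof (rule Lim_null_comparison)
    have "eventually (\<lambda>x. x > x0 / 2) (at x0)"
      using x0 by (intro order_tendstoD(1)[OF tendsto_ident_at]) auto
    then show "eventually (\<lambda>x. norm (besselK n x - besselK n x0) \<le> \<bar>x - x0\<bar> * M) (at x0)"
      by eventually_elim (use besselK_lipschitz[of "x0 / 2" _ x0 n] x0 n in \<open>auto simp: M_def\<close>)
    show "((\<lambda>x. \<bar>x - x0\<bar> * M) \<longlongrightarrow> 0) (at x0)"
      by (auto intro!: tendsto_eq_intros)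
  qed
  then show ?thesis
    unfolding isCont_def by (simp add: LIM_zero_iff)
qed

lemma besselK_1_at_0: "filterlim (besselK 1) at_top (at_right 0)"
proof (subst filterlim_at_top, intro allI)
  fix Z :: real
  define b where "b = 3 * (\<bar>Z\<bar> + 1)"
  have b: "b > 0" "Z \<le> b / 3"
    unfolding b_def by auto
  have "eventually (\<lambda>x. x \<in> {0<..<1 / cosh b}) (at_right 0)"
    using cosh_real_pos[of b] by (intro eventually_at_right_real) auto
  then show "eventually (\<lambda>x. Z \<le> besselK 1 x) (at_right 0)"
  proof eventually_elim
    case (elim x)
    then have x: "x > 0" "x * cosh b < 1"
      using cosh_real_pos[of b] by (auto simp: field_simps)
    have "1 / 3 \<le> exp (- 1 :: real)"
      using exp_le by (simp add: exp_minus field_simps)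
    also have "\<dots> \<le> exp (- x * cosh b)"
      using x by simp
    finally have "b / 3 \<le> b * exp (- x * cosh b)"
      using b by (simp add: mult_left_mono)
    then show ?case
      using besselK_lower_bound[of x b 1] x b by linarith
  qed
qed

lemma summable_besselI_series: "summable (\<lambda>k. inverse (fact k * fact (k + n)) * y ^ k :: real)"
proof (rule summable_comparison_test'[OF summable_exp[of "\<bar>y\<bar>"]])
  fix k :: nat
  have "fact k \<le> (fact k * fact (k + n) :: real)"
    using fact_ge_1[of "k + n", where 'a = real] by (simp add: mult_le_cancel_left1)
  then have "inverse (fact k * fact (k + n)) \<le> (inverse (fact k) :: real)"
    by (intro le_imp_inverse_le) auto
  then show "norm (inverse (fact k * fact (k + n)) * y ^ k) \<le> inverse (fact k) * \<bar>y\<bar> ^ k"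
    by (simp add: abs_mult power_abs mult_right_mono)
qed

lemma besselI_eq_powser:
  "besselI n x = (x / 2) ^ n * (\<Sum>k. inverse (fact k * fact (k + n)) * ((x / 2) ^ 2) ^ k)"
proof -
  have "(\<lambda>k. (x / 2) ^ (2 * k + n) / (fact k * fact (k + n)))
      = (\<lambda>k. (x / 2) ^ n * (inverse (fact k * fact (k + n)) * ((x / 2) ^ 2) ^ k))"
    by (simp only: power_add power_mult) (simp only: divide_inverse ac_simps)
  then show ?thesis
    unfolding besselI_def using suminf_mult[OF summable_besselI_series] by simp
qed

lemma isCont_besselI: "isCont (besselI n) x"
proof -
  have powser: "isCont (\<lambda>y. \<Sum>k. inverse (fact k * fact (k + n)) * y ^ k) y" for y :: real
    by (rule isCont_powser[OF summable_besselI_series[of n "\<bar>y\<bar> + 1"]]) simp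
  have "isCont (\<lambda>x. (x / 2) ^ n * (\<Sum>k. inverse (fact k * fact (k + n)) * ((x / 2) ^ 2) ^ k)) x"
    by (intro continuous_intros isCont_o2[OF _ powser]) auto
  then show ?thesis
    by (simp add: besselI_eq_powser[abs_def])
qed

lemma besselI_pos: "x > 0 \<Longrightarrow> besselI n x > 0"
  unfolding besselI_eq_powser
  by (intro mult_pos_pos zero_less_power suminf_pos summable_besselI_series) auto

lemma x_cosh_minus_sinh_pos:
  fixes r :: real
  assumes "r > 0"
  shows "r * cosh r - sinh r > 0"
proof -
  have "(\<lambda>t. t * cosh t - sinh t) 0 < (\<lambda>t. t * cosh t - sinh t) r"
  proof (rule DERIV_pos_imp_increasing_open[OF assms])
    fix t :: real assume "0 < t" "t < r"
    then show "\<exists>y. ((\<lambda>t. t * cosh t - sinh t) has_real_derivative y) (at t) \<and> 0 < y"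
      by (intro exI[of _ "t * sinh t"] conjI derivative_eq_intros) auto
  qed (intro continuous_intros)
  then show ?thesis by simp
qed

lemma sph_i_pos: "r > 0 \<Longrightarrow> sph_i j r > 0"
  using x_cosh_minus_sinh_pos[of r] by (auto simp: sph_i_def)

lemma sph_k_pos: "r > 0 \<Longrightarrow> sph_k j r > 0"
  by (auto simp: sph_k_def)

lemma sph_k_0_le_1: "r > 0 \<Longrightarrow> sph_k 0 r \<le> sph_k 1 r"
  by (auto simp: sph_k_def field_simps power2_eq_square)

lemma isCont_sph_i: "r > 0 \<Longrightarrow> isCont (sph_i j) r"
  unfolding sph_i_def[abs_def] by (cases "j = 0") (auto intro!: continuous_intros)

lemma isCont_sph_k: "r > 0 \<Longrightarrow> isCont (sph_k j) r"
  unfolding sph_k_def[abs_def] by (cases "j = 0") (auto intro!: continuous_intros)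

lemma sph_i_over_sph_k_1_at_0: "((\<lambda>r. sph_i j r / sph_k 1 r) \<longlongrightarrow> 0) (at_right 0)"
proof (cases "j = 0")
  case True
  then have eq: "(\<lambda>r. sph_i j r / sph_k 1 r) = (\<lambda>r. (sinh r / r) / (exp (- r) * (r + 1) / r ^ 2))"
    by (simp add: sph_i_def sph_k_def)
  show ?thesis unfolding eq by real_asymp
next
  case False
  then have eq: "(\<lambda>r. sph_i j r / sph_k 1 r)
      = (\<lambda>r. ((r * cosh r - sinh r) / r ^ 2) / (exp (- r) * (r + 1) / r ^ 2))"
    by (simp add: sph_i_def sph_k_def)
  show ?thesis unfolding eq by real_asymp
qed

lemma BI_pos: "x > 0 \<Longrightarrow> BI d j x > 0"
  by (simp add: BI_def besselI_pos sph_i_pos)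

lemma BK_pos: "j \<le> 1 \<Longrightarrow> x > 0 \<Longrightarrow> BK d j x > 0"
  by (simp add: BK_def besselK_pos sph_k_pos)

lemma BK_0_le_1: "x > 0 \<Longrightarrow> BK d 0 x \<le> BK d 1 x"
  using besselK_0_le_1[of x] sph_k_0_le_1[of x] by (simp add: BK_def)

lemma isCont_BI [continuous_intros]: "isCont g x \<Longrightarrow> g x > 0 \<Longrightarrow> isCont (\<lambda>x. BI d j (g x)) x"
proof (rule isCont_o2[where g = "BI d j"])
  show "isCont (BI d j) (g x)" if "g x > 0"
    using that by (cases "d = 2") (simp_all add: BI_def[abs_def] isCont_besselI isCont_sph_i)
qed

lemma isCont_BK [continuous_intros]:
  "j \<le> 1 \<Longrightarrow> isCont g x \<Longrightarrow> g x > 0 \<Longrightarrow> isCont (\<lambda>x. BK d j (g x)) x"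
proof (rule isCont_o2[where g = "BK d j"])
  show "isCont (BK d j) (g x)" if "j \<le> 1" "g x > 0"
    using that by (cases "d = 2") (simp_all add: BK_def[abs_def] isCont_besselK isCont_sph_k)
qed

lemma BI_over_BK_1_at_0: "((\<lambda>x. BI d j x / BK d 1 x) \<longlongrightarrow> 0) (at_right 0)"
proof (cases "d = 2")
  case True
  have "(besselI j \<longlongrightarrow> besselI j 0) (at_right 0)"
    using isCont_besselI[where n = j and x = 0] unfolding isCont_def by (rule tendsto_within_subset) auto
  then have "((\<lambda>x. besselI j x / besselK 1 x) \<longlongrightarrow> 0) (at_right 0)"
    by (rule tendsto_divide_0[OF _ filterlim_at_top_imp_at_infinity[OF besselK_1_at_0]])
  then show ?thesis
    using True by (simp add: BI_def BK_def)
next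
  case False
  then show ?thesis
    using sph_i_over_sph_k_1_at_0[of j] by (simp add: BI_def BK_def)
qed

definition inner_ratio :: "nat \<Rightarrow> real \<Rightarrow> real \<Rightarrow> real" where
  "inner_ratio d l q = BI d 1 (l * q) / BI d 0 (l * q)"

definition outer_ratio :: "nat \<Rightarrow> real \<Rightarrow> real \<Rightarrow> real \<Rightarrow> real" where
  "outer_ratio d l R q =
    (let c = BK d 1 (l * R) / BI d 1 (l * R)
     in (BI d 1 (l * q) * c - BK d 1 (l * q)) / (BI d 0 (l * q) * c + BK d 0 (l * q)))"

lemma calH_eq:
  "calH d R mp mm rhop rhom alpha SI Sp Sm = (\<lambda>q.
     - mp * sqrt (rhop / mp) * (alpha * (real d - 1) / q - Sp / rhop) * inner_ratio d (sqrt (rhop / mp)) q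
     + mm * sqrt (rhom / mm) * (alpha * (real d - 1) / q - Sm / rhom) * outer_ratio d (sqrt (rhom / mm)) R q
     + SI)"
  by (simp add: fun_eq_iff calH_def inner_ratio_def outer_ratio_def Let_def)

lemma inner_ratio_pos: "l > 0 \<Longrightarrow> q > 0 \<Longrightarrow> inner_ratio d l q > 0"
  by (simp add: inner_ratio_def BI_pos)

lemma isCont_inner_ratio: "l > 0 \<Longrightarrow> q > 0 \<Longrightarrow> isCont (inner_ratio d l) q"
  unfolding inner_ratio_def[abs_def] using BI_pos[of "l * q" d 0]
  by (intro continuous_intros) auto

lemma outer_ratio_at_R: "l > 0 \<Longrightarrow> R > 0 \<Longrightarrow> outer_ratio d l R R = 0"
  using BI_pos[of "l * R" d 1] by (simp add: outer_ratio_def)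

lemma outer_ratio_denominator_pos:
  "l > 0 \<Longrightarrow> R > 0 \<Longrightarrow> q > 0 \<Longrightarrow>
    BI d 0 (l * q) * (BK d 1 (l * R) / BI d 1 (l * R)) + BK d 0 (l * q) > 0"
  by (intro add_pos_pos mult_pos_pos divide_pos_pos BI_pos BK_pos) auto

lemma isCont_outer_ratio: "l > 0 \<Longrightarrow> R > 0 \<Longrightarrow> q > 0 \<Longrightarrow> isCont (outer_ratio d l R) q"
  unfolding outer_ratio_def[abs_def] Let_def using outer_ratio_denominator_pos[of l R q d]
  by (intro continuous_intros) auto

lemma eventually_at_right_0_scale:
  fixes l :: real
  assumes "l > 0" "eventually P (at_right 0)"
  shows "eventually (\<lambda>q. P (l * q)) (at_right 0)"
proof -
  obtain b where "b > 0" and b: "\<And>y. 0 < y \<Longrightarrow> y < b \<Longrightarrow> P y"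
    using assms(2) unfolding eventually_at_right_field by auto
  then show ?thesis
    unfolding eventually_at_right_field using assms(1)
    by (intro exI[of _ "b / l"]) (auto simp: field_simps)
qed

lemma outer_ratio_eventually_le:
  assumes "l > 0" "R > 0"
  shows "eventually (\<lambda>q. outer_ratio d l R q \<le> - 1 / 2) (at_right 0)"
proof -
  define c where "c = BK d 1 (l * R) / BI d 1 (l * R)"
  have "c > 0"
    unfolding c_def using assms by (intro divide_pos_pos BI_pos BK_pos) auto
  have small: "eventually (\<lambda>x. BI d j x / BK d 1 x < 1 / (4 * c)) (at_right 0)" for j
    using order_tendstoD(2)[OF BI_over_BK_1_at_0] \<open>c > 0\<close> by simp
  have "eventually (\<lambda>x. 0 < x \<and> BI d 1 x / BK d 1 x < 1 / (4 * c) \<and> BI d 0 x / BK d 1 x < 1 / (4 * c))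
      (at_right 0)"
    using eventually_at_right_less small[of 1] small[of 0] by eventually_elim auto
  then have "eventually (\<lambda>q. 0 < l * q \<and> BI d 1 (l * q) / BK d 1 (l * q) < 1 / (4 * c)
      \<and> BI d 0 (l * q) / BK d 1 (l * q) < 1 / (4 * c)) (at_right 0)"
    by (rule eventually_at_right_0_scale[OF \<open>l > 0\<close>])
  then show ?thesis
  proof eventually_elim
    case (elim q)
    define x where "x = l * q"
    have pos: "x > 0" "BI d 0 x > 0" "BK d 0 x > 0" "BK d 1 x > 0"
      using elim BI_pos BK_pos unfolding x_def by auto
    have "2 * (BI d 1 x * c) + BI d 0 x * c + BK d 0 x \<le> 2 * BK d 1 x"
      using elim BK_0_le_1[of x d] pos \<open>c > 0\<close> unfolding x_def[symmetric] by (simp add: field_simps)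
    then show ?case
      using pos \<open>c > 0\<close> unfolding outer_ratio_def c_def[symmetric] x_def[symmetric] Let_def
      by (simp add: field_simps add_pos_pos)
  qed
qed

lemma last_crossing:
  fixes q :: "real \<Rightarrow> real"
  assumes cont: "continuous_on {s..t} q" and "s \<le> t" "q s \<le> c" "c < q t"
  obtains t1 where "t1 \<in> {s..<t}" "q t1 = c" "\<And>\<tau>. \<tau> \<in> {t1<..t} \<Longrightarrow> c < q \<tau>"
proof -
  define S where "S = {s..t} \<inter> q -` {..c}"
  have "compact S"
    unfolding S_def compact_eq_bounded_closed
    by (auto intro: continuous_closed_preimage[OF cont] bounded_subset[of "{s..t}"])
  moreover have "s \<in> S"
    using assms unfolding S_def by auto
  ultimately obtain t1 where t1: "t1 \<in> S" "\<And>\<tau>. \<tau> \<in> S \<Longrightarrow> \<tau> \<le> t1"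
    using compact_attains_sup[of S] by blast
  have after: "c < q \<tau>" if "\<tau> \<in> {t1<..t}" for \<tau>
  proof (rule ccontr)
    assume "\<not> c < q \<tau>"
    then have "\<tau> \<in> S"
      using t1(1) that unfolding S_def by auto
    then show False
      using t1(2) that by force
  qed
  have "t1 < t"
    using t1(1) assms(4) unfolding S_def by (cases "t1 = t") auto
  moreover have "q t1 = c"
  proof (rule ccontr)
    assume "q t1 \<noteq> c"
    then have "q t1 < c"
      using t1(1) unfolding S_def by auto
    then obtain \<sigma> where "t1 \<le> \<sigma>" "\<sigma> \<le> t" "q \<sigma> = c"
      using IVT'[of q t1 c t] assms(4) t1(1) continuous_on_subset[OF cont, of "{t1..t}"]
      unfolding S_def by auto
    then show False
      using after[of \<sigma>] \<open>q t1 < c\<close> by (cases "\<sigma> = t1") auto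
  qed
  ultimately show ?thesis
    using that t1(1) after unfolding S_def by auto
qed

lemma radial_solution_continuous: "radial_solution H R q T \<Longrightarrow> continuous_on {0..<T} q"
  unfolding radial_solution_def continuous_on_eq_continuous_within
  by (auto intro: DERIV_continuous)

lemma radial_solution_DERIV:
  "radial_solution H R q T \<Longrightarrow> t \<in> {0<..<T} \<Longrightarrow> DERIV q t :> H (q t) / 2"
proof -
  assume sol: "radial_solution H R q T" and t: "t \<in> {0<..<T}"
  then have "(q has_real_derivative H (q t) / 2) (at t within {0..<T})"
    unfolding radial_solution_def by auto
  moreover have "at t within {0..<T} = at t"
    using t by (intro at_within_interior) auto
  ultimately show ?thesis by simp
qed

lemma radial_solution_upper_barrier:
  assumes sol: "radial_solution H R q T"
    and nonpos: "\<And>x. v < x \<Longrightarrow> x < R \<Longrightarrow> H x \<le> 0"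
    and "q 0 \<le> v" "t \<in> {0..<T}"
  shows "q t \<le> v"
proof (rule ccontr)
  assume "\<not> q t \<le> v"
  moreover have cont: "continuous_on {0..t} q"
    using radial_solution_continuous[OF sol] by (rule continuous_on_subset) (use assms in auto)
  ultimately obtain t1 where t1: "t1 \<in> {0..<t}" "q t1 = v" "\<And>\<tau>. \<tau> \<in> {t1<..t} \<Longrightarrow> v < q \<tau>"
    using last_crossing[OF cont, of v] assms by auto
  have "q t \<le> q t1"
  proof (rule DERIV_nonpos_imp_decreasing_open[of t1 t])
    fix \<tau> assume \<tau>: "t1 < \<tau>" "\<tau> < t"
    have "q \<tau> < R"
      using sol \<tau> t1(1) assms(4) unfolding radial_solution_def by auto
    then show "\<exists>y. DERIV q \<tau> :> y \<and> y \<le> 0"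
      using radial_solution_DERIV[OF sol, of \<tau>] nonpos[of "q \<tau>"] t1(3)[of \<tau>] \<tau> t1(1) assms(4)
      by auto
  qed (use t1 continuous_on_subset[OF cont] in auto)
  then show False
    using t1(2) \<open>\<not> q t \<le> v\<close> by simp
qed

lemma radial_solution_lower_barrier:
  assumes sol: "radial_solution H R q T" and "H u > 0" "u \<le> q 0" "t \<in> {0..<T}"
  shows "u \<le> q t"
proof (rule ccontr)
  assume "\<not> u \<le> q t"
  moreover have cont: "continuous_on {0..t} (\<lambda>\<tau>. - q \<tau>)"
    using radial_solution_continuous[OF sol] assms(4)
    by (intro continuous_intros) (auto elim: continuous_on_subset)
  ultimately obtain t1 where t1: "t1 \<in> {0..<t}" "q t1 = u" "\<And>\<tau>. \<tau> \<in> {t1<..t} \<Longrightarrow> q \<tau> < u"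
    using last_crossing[OF cont, of "- u"] assms by auto
  \<comment> \<open>at the last time with \<open>q t1 = u\<close> the speed \<open>H u / 2\<close> is positive, so \<open>q > u\<close> just after \<open>t1\<close>\<close>
  have "(q has_real_derivative H u / 2) (at t1 within {0..<T})"
    using sol t1 assms(4) unfolding radial_solution_def by auto
  then obtain d where d: "d > 0" "\<And>h. h > 0 \<Longrightarrow> t1 + h \<in> {0..<T} \<Longrightarrow> h < d \<Longrightarrow> q t1 < q (t1 + h)"
    using has_real_derivative_pos_inc_right assms(2) by (metis half_gt_zero)
  define h where "h = min (d / 2) (t - t1)"
  have "h > 0" "h < d" "t1 + h \<in> {0..<T}" "t1 + h \<in> {t1<..t}"
    using d t1 assms(4) unfolding h_def by auto
  then show False
    using d(2)[of h] t1(2) t1(3)[of "t1 + h"] by auto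
qed

lemma ode_stableI:
  assumes left: "\<And>e. e > 0 \<Longrightarrow> \<exists>u\<in>{b - e<..<b}. H u > 0"
    and right: "\<And>x. b < x \<Longrightarrow> x < R \<Longrightarrow> H x \<le> 0"
  shows "ode_stable H R b"
  unfolding ode_stable_def
proof (intro allI impI)
  fix e :: real assume "e > 0"
  then obtain u where u: "u \<in> {b - e<..<b}" "H u > 0"
    using left by blast
  define v where "v = b + e / 2"
  define \<delta> where "\<delta> = min (b - u) (v - b)"
  have "\<delta> > 0"
    using u \<open>e > 0\<close> unfolding \<delta>_def v_def by auto
  moreover have "\<forall>q T. radial_solution H R q T \<and> \<bar>q 0 - b\<bar> < \<delta> \<longrightarrow> (\<forall>t\<in>{0..<T}. \<bar>q t - b\<bar> < e)"
  proof (intro allI impI ballI)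
    fix q T t assume "radial_solution H R q T \<and> \<bar>q 0 - b\<bar> < \<delta>" and t: "t \<in> {0..<T}"
    then have sol: "radial_solution H R q T" and q0: "u < q 0" "q 0 < v"
      unfolding \<delta>_def by auto
    have "b < v"
      using \<open>e > 0\<close> unfolding v_def by simp
    then have "q t \<le> v"
      using right q0 by (intro radial_solution_upper_barrier[OF sol _ _ t]) auto
    moreover have "u \<le> q t"
      using q0 by (intro radial_solution_lower_barrier[OF sol u(2) _ t]) auto
    ultimately show "\<bar>q t - b\<bar> < e"
      using u \<open>e > 0\<close> unfolding v_def by auto
  qed
  ultimately show "\<exists>\<delta>>0. \<forall>q T. radial_solution H R q T \<and> \<bar>q 0 - b\<bar> < \<delta>
      \<longrightarrow> (\<forall>t\<in>{0..<T}. \<bar>q t - b\<bar> < e)"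
    by (intro exI conjI)
qed

lemma strict_mono_on_continuous_inverse:
  fixes \<Phi> :: "real \<Rightarrow> real"
  assumes "u \<le> v" and cont: "continuous_on {u..v} \<Phi>" and mono: "strict_mono_on {u..v} \<Phi>"
  obtains \<Psi> where "\<And>x. x \<in> {u..v} \<Longrightarrow> \<Psi> (\<Phi> x) = x"
    and "\<And>s. s \<in> {\<Phi> u..\<Phi> v} \<Longrightarrow> \<Psi> s \<in> {u..v} \<and> \<Phi> (\<Psi> s) = s"
    and "continuous_on {\<Phi> u..\<Phi> v} \<Psi>"
proof
  have inj: "inj_on \<Phi> {u..v}"
    using mono by (rule strict_mono_on_imp_inj_on)
  have image: "\<Phi> ` {u..v} = {\<Phi> u..\<Phi> v}"
  proof
    show "\<Phi> ` {u..v} \<subseteq> {\<Phi> u..\<Phi> v}"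
      using mono \<open>u \<le> v\<close> by (auto simp: strict_mono_on_leD)
    show "{\<Phi> u..\<Phi> v} \<subseteq> \<Phi> ` {u..v}"
      using IVT'[of \<Phi> u _ v] cont \<open>u \<le> v\<close> by fastforce
  qed
  show "the_inv_into {u..v} \<Phi> (\<Phi> x) = x" if "x \<in> {u..v}" for x
    using inj that by (rule the_inv_into_f_f)
  show "the_inv_into {u..v} \<Phi> s \<in> {u..v} \<and> \<Phi> (the_inv_into {u..v} \<Phi> s) = s"
    if "s \<in> {\<Phi> u..\<Phi> v}" for s
    using the_inv_into_into[OF inj, of s "{u..v}"] f_the_inv_into_f[OF inj, of s] that image by auto
  show "continuous_on {\<Phi> u..\<Phi> v} (the_inv_into {u..v} \<Phi>)"
    unfolding image[symmetric] using cont inj by (rule continuous_on_inv_into[OF _ compact_Icc])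
qed

lemma strict_mono_on_inverse_DERIV:
  fixes \<Phi> \<phi> :: "real \<Rightarrow> real"
  assumes "u < v" and cont: "continuous_on {u..v} \<Phi>" and mono: "strict_mono_on {u..v} \<Phi>"
    and deriv: "\<And>x. x \<in> {u<..<v} \<Longrightarrow> DERIV \<Phi> x :> \<phi> x"
    and nonzero: "\<And>x. x \<in> {u<..<v} \<Longrightarrow> \<phi> x \<noteq> 0"
  obtains \<Psi> where "\<And>x. x \<in> {u..v} \<Longrightarrow> \<Psi> (\<Phi> x) = x"
    and "\<And>s. s \<in> {\<Phi> u<..<\<Phi> v} \<Longrightarrow> \<Psi> s \<in> {u<..<v}"
    and "\<And>s. s \<in> {\<Phi> u<..<\<Phi> v} \<Longrightarrow> DERIV \<Psi> s :> inverse (\<phi> (\<Psi> s))"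
proof -
  obtain \<Psi> where left_inv: "\<And>x. x \<in> {u..v} \<Longrightarrow> \<Psi> (\<Phi> x) = x"
    and right_inv: "\<And>s. s \<in> {\<Phi> u..\<Phi> v} \<Longrightarrow> \<Psi> s \<in> {u..v} \<and> \<Phi> (\<Psi> s) = s"
    and cont_inv: "continuous_on {\<Phi> u..\<Phi> v} \<Psi>"
    using strict_mono_on_continuous_inverse[OF less_imp_le[OF \<open>u < v\<close>] cont mono] by metis
  have inner: "\<Psi> s \<in> {u<..<v}" if "s \<in> {\<Phi> u<..<\<Phi> v}" for s
  proof -
    have "\<Psi> s \<in> {u..v}" "\<Phi> (\<Psi> s) = s"
      using right_inv[of s] that by auto
    moreover from this(2) have "\<Psi> s \<noteq> u" "\<Psi> s \<noteq> v"
      using that by auto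
    ultimately show ?thesis
      by auto
  qed
  have "DERIV \<Psi> s :> inverse (\<phi> (\<Psi> s))" if "s \<in> {\<Phi> u<..<\<Phi> v}" for s
  proof (rule DERIV_inverse_function[where f = \<Phi> and a = "\<Phi> u" and b = "\<Phi> v"])
    show "DERIV \<Phi> (\<Psi> s) :> \<phi> (\<Psi> s)" "\<phi> (\<Psi> s) \<noteq> 0"
      using deriv nonzero inner[OF that] by auto
    show "\<Phi> u < s" "s < \<Phi> v"
      using that by auto
    show "\<Phi> (\<Psi> y) = y" if "\<Phi> u < y" "y < \<Phi> v" for y
      using right_inv[of y] that by auto
    show "isCont \<Psi> s"
      using continuous_on_interior[OF cont_inv] that by auto
  qed
  then show ?thesis
    using that left_inv inner by blast
qed

lemma primitive_of_pos_strict_mono: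
  fixes f :: "real \<Rightarrow> real"
  assumes cont: "continuous_on {u..v} f" and pos: "\<And>x. x \<in> {u..v} \<Longrightarrow> f x > 0"
  shows "continuous_on {u..v} (\<lambda>x. integral {u..x} f)"
    and "\<And>x. x \<in> {u<..<v} \<Longrightarrow> DERIV (\<lambda>x. integral {u..x} f) x :> f x"
    and "strict_mono_on {u..v} (\<lambda>x. integral {u..x} f)"
proof -
  have deriv_within: "((\<lambda>x. integral {u..x} f) has_real_derivative f x) (at x within {u..v})"
    if "x \<in> {u..v}" for x
    by (rule integral_has_real_derivative[OF cont that])
  then show cont_\<Phi>: "continuous_on {u..v} (\<lambda>x. integral {u..x} f)"
    unfolding continuous_on_eq_continuous_within by (meson DERIV_continuous)
  show deriv: "DERIV (\<lambda>x. integral {u..x} f) x :> f x" if "x \<in> {u<..<v}" for x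
    using deriv_within[of x] that at_within_interior[of x "{u..v}"] by auto
  show "strict_mono_on {u..v} (\<lambda>x. integral {u..x} f)"
  proof (rule strict_mono_onI)
    fix x z assume x: "x \<in> {u..v}" and z: "z \<in> {u..v}" and "x < z"
    show "integral {u..x} f < integral {u..z} f"
    proof (rule DERIV_pos_imp_increasing_open[OF \<open>x < z\<close>])
      fix w assume "x < w" "w < z"
      then show "\<exists>d. DERIV (\<lambda>x. integral {u..x} f) w :> d \<and> 0 < d"
        using deriv[of w] pos[of w] x z by auto
    next
      show "continuous_on {x..z} (\<lambda>x. integral {u..x} f)"
        using cont_\<Phi> by (rule continuous_on_subset) (use x z in auto)
    qed
  qed
qed

lemma radial_solution_shift:
  fixes \<Psi> H :: "real \<Rightarrow> real"
  assumes "a < s0" "s0 < b"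
    and sol: "\<And>s. s \<in> {a<..<b} \<Longrightarrow> \<Psi> s \<in> {0<..<R} \<and> DERIV \<Psi> s :> H (\<Psi> s) / 2"
  shows "radial_solution H R (\<lambda>t. \<Psi> (t + s0)) (b - s0)"
  unfolding radial_solution_def
proof (intro conjI ballI)
  show "b - s0 > 0"
    using assms(2) by simp
  fix t assume "t \<in> {0..<b - s0}"
  then have s: "t + s0 \<in> {a<..<b}"
    using assms(1) by auto
  then show "\<Psi> (t + s0) \<in> {0<..<R}"
    using sol by blast
  have "DERIV (\<lambda>t. \<Psi> (t + s0)) t :> H (\<Psi> (t + s0)) / 2 * 1"
    using sol[OF s] by (intro DERIV_chain2[where g = "\<lambda>t. t + s0"]) (auto intro!: derivative_eq_intros)
  then show "((\<lambda>t. \<Psi> (t + s0)) has_real_derivative H (\<Psi> (t + s0)) / 2) (at t within {0..<b - s0})"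
    by (auto intro: has_field_derivative_at_within)
qed

lemma radial_solution_through:
  fixes H :: "real \<Rightarrow> real"
  assumes "0 < u" "u < v" "v \<le> R" and cont: "continuous_on {u..v} H"
    and pos: "\<And>x. x \<in> {u..v} \<Longrightarrow> H x > 0" and "y \<in> {u<..<v}" "c \<in> {y..<v}"
  obtains q T where "radial_solution H R q T" "q 0 = y" "c \<in> q ` {0..<T}"
proof -
  \<comment> \<open>separation of variables: \<open>q t = \<Psi> (t + \<Phi> y)\<close> with \<open>\<Psi>\<close> the inverse of \<open>\<Phi>' = 2 / H\<close>\<close>
  define \<Phi> where "\<Phi> x = integral {u..x} (\<lambda>s. 2 / H s)" for x
  have "continuous_on {u..v} (\<lambda>s. 2 / H s)"
    using cont pos by (intro continuous_intros) force+
  from primitive_of_pos_strict_mono[OF this] pos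
  have cont_\<Phi>: "continuous_on {u..v} \<Phi>" and deriv: "\<And>x. x \<in> {u<..<v} \<Longrightarrow> DERIV \<Phi> x :> 2 / H x"
    and mono: "strict_mono_on {u..v} \<Phi>"
    unfolding \<Phi>_def[abs_def] by auto
  have nonzero: "2 / H x \<noteq> 0" if "x \<in> {u<..<v}" for x
    using pos[of x] that by auto
  obtain \<Psi> where left_inv: "\<And>x. x \<in> {u..v} \<Longrightarrow> \<Psi> (\<Phi> x) = x"
    and inner: "\<And>s. s \<in> {\<Phi> u<..<\<Phi> v} \<Longrightarrow> \<Psi> s \<in> {u<..<v}"
    and deriv_inv: "\<And>s. s \<in> {\<Phi> u<..<\<Phi> v} \<Longrightarrow> DERIV \<Psi> s :> inverse (2 / H (\<Psi> s))"
    using strict_mono_on_inverse_DERIV[OF \<open>u < v\<close> cont_\<Phi> mono deriv nonzero] by metis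
  have \<Phi>_order: "\<Phi> u < \<Phi> y" "\<Phi> c < \<Phi> v" "\<Phi> y \<le> \<Phi> c"
    using assms(6,7) by (auto intro!: strict_mono_onD[OF mono] strict_mono_on_leD[OF mono])
  have "radial_solution H R (\<lambda>t. \<Psi> (t + \<Phi> y)) (\<Phi> v - \<Phi> y)"
  proof (rule radial_solution_shift[of "\<Phi> u"])
    show "\<Phi> u < \<Phi> y" "\<Phi> y < \<Phi> v"
      using \<Phi>_order by auto
    show "\<Psi> s \<in> {0<..<R} \<and> DERIV \<Psi> s :> H (\<Psi> s) / 2" if "s \<in> {\<Phi> u<..<\<Phi> v}" for s
    proof
      show "\<Psi> s \<in> {0<..<R}"
        using inner[OF that] assms(1,3) by auto
      show "DERIV \<Psi> s :> H (\<Psi> s) / 2"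
        using deriv_inv[OF that] by (simp add: inverse_divide)
    qed
  qed
  moreover have "\<Psi> (0 + \<Phi> y) = y" "\<Psi> ((\<Phi> c - \<Phi> y) + \<Phi> y) = c"
    using left_inv assms(6,7) by auto
  moreover have "\<Phi> c - \<Phi> y \<in> {0..<\<Phi> v - \<Phi> y}"
    using \<Phi>_order by auto
  ultimately show ?thesis
    using that by (metis image_eqI)
qed

lemma ode_unstableI:
  fixes H :: "real \<Rightarrow> real"
  assumes "0 \<le> a" "a < p" "p \<le> R" and cont: "continuous_on {a..p} H"
    and pos: "\<And>x. x \<in> {a<..p} \<Longrightarrow> H x > 0"
  shows "ode_unstable H R a"
  unfolding ode_unstable_def
proof
  assume "ode_stable H R a"
  moreover define e where "e = (p - a) / 2"
  moreover have "e > 0"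
    using assms unfolding e_def by simp
  ultimately obtain \<delta> where "\<delta> > 0"
    and stable: "\<And>q T. radial_solution H R q T \<Longrightarrow> \<bar>q 0 - a\<bar> < \<delta> \<Longrightarrow> \<forall>t\<in>{0..<T}. \<bar>q t - a\<bar> < e"
    unfolding ode_stable_def by meson
  define m where "m = min \<delta> e"
  have m: "0 < m" "m \<le> \<delta>" "m \<le> e"
    using \<open>\<delta> > 0\<close> \<open>e > 0\<close> unfolding m_def by auto
  have "a + e < p"
    using \<open>a < p\<close> unfolding e_def by (simp add: field_simps)
  have cont': "continuous_on {a + m / 4..p} H"
    using m by (intro continuous_on_subset[OF cont]) auto
  have pos': "H x > 0" if "x \<in> {a + m / 4..p}" for x
    using pos m that by auto
  \<comment> \<open>since \<open>H > 0\<close> on \<open>(a, p]\<close>, the solution started at \<open>a + m / 2\<close> climbs to \<open>a + e\<close>\<close>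
  obtain q T where sol: "radial_solution H R q T" and "q 0 = a + m / 2" and "a + e \<in> q ` {0..<T}"
    by (rule radial_solution_through[OF _ _ \<open>p \<le> R\<close> cont' pos', of "a + m / 2" "a + e"])
      (use \<open>0 \<le> a\<close> m \<open>a + e < p\<close> in auto)
  then obtain t where "t \<in> {0..<T}" "q t = a + e"
    by auto
  moreover have "\<bar>q 0 - a\<bar> < \<delta>"
    using \<open>q 0 = a + m / 2\<close> m by simp
  ultimately have "\<bar>q t - a\<bar> < e"
    using stable[OF sol] by blast
  then show False
    using \<open>q t = a + e\<close> by simp
qed

lemma continuous_ge_at_Sup:
  fixes f :: "real \<Rightarrow> real"
  assumes cont: "continuous_on {p..r} f" and "S \<subseteq> {p..r}" "S \<noteq> {}"
    and ge: "\<And>x. x \<in> S \<Longrightarrow> a \<le> f x"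
  shows "Sup S \<in> {p..r}" and "a \<le> f (Sup S)"
proof -
  have closure: "closure S \<subseteq> {p..r}"
    using \<open>S \<subseteq> {p..r}\<close> by (intro closure_minimal) auto
  have "Sup S \<in> closure S"
    using \<open>S \<noteq> {}\<close> \<open>S \<subseteq> {p..r}\<close> by (intro closure_contains_Sup bdd_aboveI[of _ r]) auto
  then show "Sup S \<in> {p..r}"
    using closure by auto
  show "a \<le> f (Sup S)"
    using continuous_on_subset[OF cont closure] \<open>Sup S \<in> closure S\<close> ge
    by (rule continuous_ge_on_closure)
qed

lemma sup_positive_part_root:
  fixes H :: "real \<Rightarrow> real"
  assumes "p < r" and cont: "continuous_on {p..r} H" and "H p > 0" "H r < 0"
  obtains b where "b \<in> {p<..<r}" "H b = 0" "\<And>x. x \<in> {b<..r} \<Longrightarrow> H x \<le> 0"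
    "\<And>e. e > 0 \<Longrightarrow> \<exists>u\<in>{b - e<..<b}. H u > 0"
proof -
  define S where "S = {x \<in> {p..r}. H x > 0}"
  define b where "b = Sup S"
  have "p \<in> S" "S \<subseteq> {p..r}"
    using assms unfolding S_def by auto
  then have "b \<in> {p..r}" "0 \<le> H b"
    using continuous_ge_at_Sup[OF cont, of S 0] unfolding b_def S_def by auto
  have "bdd_above S"
    using bdd_above_Icc \<open>S \<subseteq> {p..r}\<close> by (rule bdd_above_mono)
  have upper: "x \<le> b" if "x \<in> S" for x
    unfolding b_def using that \<open>bdd_above S\<close> by (rule cSup_upper)
  have "b < r"
    using \<open>b \<in> {p..r}\<close> \<open>0 \<le> H b\<close> \<open>H r < 0\<close> by (cases "b = r") auto
  have right: "H x \<le> 0" if "x \<in> {b<..r}" for x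
    using upper[of x] that \<open>b \<in> {p..r}\<close> unfolding S_def by force
  have "H b \<le> 0"
  proof (rule continuous_le_on_closure[where S = "{b<..r}" and f = H and x = b])
    show "continuous_on (closure {b<..r}) H"
      using \<open>b < r\<close> \<open>b \<in> {p..r}\<close> by (intro continuous_on_subset[OF cont]) auto
  qed (use \<open>b < r\<close> right in auto)
  then have "H b = 0"
    using \<open>0 \<le> H b\<close> by simp
  have left: "\<exists>u\<in>{b - e<..<b}. H u > 0" if "e > 0" for e
  proof -
    obtain u where "u \<in> S" "b - e < u"
      using less_cSupD[of S "b - e"] \<open>p \<in> S\<close> \<open>e > 0\<close> unfolding b_def by auto
    moreover have "u \<noteq> b"
      using \<open>u \<in> S\<close> \<open>H b = 0\<close> unfolding S_def by auto
    ultimately show ?thesis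
      using upper[of u] unfolding S_def by auto
  qed
  have "b \<in> {p<..<r}"
    using \<open>b \<in> {p..r}\<close> \<open>b < r\<close> \<open>H b = 0\<close> \<open>H p > 0\<close> by (cases "b = p") auto
  from that[OF this \<open>H b = 0\<close> right left] show ?thesis .
qed

lemma unstable_and_stable_roots:
  fixes H :: "real \<Rightarrow> real"
  assumes "0 < q0" "q0 < p" "p < R" and cont: "continuous_on {q0..R} H"
    and "H q0 < 0" "H p > 0" "H R < 0"
  obtains a b where "a \<in> {q0<..<p}" "b \<in> {p<..<R}" "H a = 0" "H b = 0"
    "ode_unstable H R a" "ode_stable H R b"
proof -
  have "continuous_on {q0..p} H" "continuous_on {p..R} H"
    using assms by (auto intro: continuous_on_subset[OF cont])
  obtain a where a: "a \<in> {q0..<p}" "H a = 0" and pos: "\<And>x. x \<in> {a<..p} \<Longrightarrow> H x > 0"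
    by (rule last_crossing[OF \<open>continuous_on {q0..p} H\<close>]) (use assms in auto)
  have "a \<noteq> q0"
    using a \<open>H q0 < 0\<close> by auto
  have "ode_unstable H R a"
  proof (rule ode_unstableI[OF _ _ _ _ pos])
    show "continuous_on {a..p} H"
      using a \<open>p < R\<close> by (intro continuous_on_subset[OF cont]) auto
  qed (use a \<open>0 < q0\<close> \<open>p < R\<close> in auto)
  obtain b where b: "b \<in> {p<..<R}" "H b = 0" and nonpos: "\<And>x. x \<in> {b<..R} \<Longrightarrow> H x \<le> 0"
    and left: "\<And>e. e > 0 \<Longrightarrow> \<exists>u\<in>{b - e<..<b}. H u > 0"
    by (rule sup_positive_part_root[OF \<open>p < R\<close> \<open>continuous_on {p..R} H\<close>]) (use assms in auto)
  have "ode_stable H R b"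
    by (rule ode_stableI[OF left]) (use nonpos in auto)
  moreover have "a \<in> {q0<..<p}"
    using a \<open>a \<noteq> q0\<close> by auto
  ultimately show ?thesis
    using that b a(2) \<open>ode_unstable H R a\<close> by blast
qed

lemma card_2_less_eq:
  fixes Z :: "'a :: linorder set"
  assumes "card Z = 2" "a \<in> Z" "b \<in> Z" "a < b" "a' \<in> Z" "b' \<in> Z" "a' < b'"
  shows "a' = a \<and> b' = b"
proof -
  obtain x y where "Z = {x, y}"
    using assms(1) by (auto simp: card_2_iff)
  then show ?thesis
    using assms(2-) by auto
qed

lemma roots_of_sign_pattern:
  fixes H :: "real \<Rightarrow> real"
  assumes cont: "\<And>q. q > 0 \<Longrightarrow> isCont H q"
    and neg_near_0: "eventually (\<lambda>q. H q < 0) (at_right 0)"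
    and "\<exists>p\<in>{0<..<R}. H p > 0" "H R < 0"
  defines "Z \<equiv> {q \<in> {0<..<R}. H q = 0}"
  shows "(\<exists>a\<in>Z. \<exists>b\<in>Z. a \<noteq> b)
    \<and> (\<exists>a\<in>Z. \<exists>b\<in>Z. a \<noteq> b \<and> ode_unstable H R a \<and> ode_stable H R b)
    \<and> (card Z = 2 \<longrightarrow> (\<forall>a\<in>Z. \<forall>b\<in>Z. a < b \<longrightarrow> ode_unstable H R a \<and> ode_stable H R b))"
proof -
  obtain p where "p \<in> {0<..<R}" "H p > 0"
    using assms(3) by blast
  have "eventually (\<lambda>q. H q < 0 \<and> q \<in> {0<..<p}) (at_right 0)"
    using neg_near_0 eventually_at_right_real[of 0 p] \<open>p \<in> {0<..<R}\<close> by (auto elim: eventually_conj)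
  then obtain q0 where q0: "q0 \<in> {0<..<p}" "H q0 < 0"
    using eventually_happens'[OF trivial_limit_at_right_real] by blast
  have "continuous_on {q0..R} H"
    using q0 cont by (intro continuous_at_imp_continuous_on) auto
  then obtain a b where "a \<in> {q0<..<p}" "b \<in> {p<..<R}" "H a = 0" "H b = 0"
    and ab: "ode_unstable H R a" "ode_stable H R b"
    using unstable_and_stable_roots[of q0 p R H] q0 \<open>p \<in> {0<..<R}\<close> \<open>H p > 0\<close> \<open>H R < 0\<close>
    by auto
  then have "a \<in> Z" "b \<in> Z" "a < b"
    using q0 unfolding Z_def by auto
  then show ?thesis
    using ab card_2_less_eq[of Z a b] by (metis order_less_irrefl)
qed

lemma eventually_less_div_at_right_0:
  fixes \<kappa> :: real
  assumes "\<kappa> > 0"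
  shows "eventually (\<lambda>q. c < \<kappa> / q) (at_right 0)"
proof -
  have "filterlim (\<lambda>q. \<kappa> * inverse q) at_top (at_right 0)"
    using assms by (intro filterlim_tendsto_pos_mult_at_top[OF tendsto_const _ filterlim_inverse_at_top_right])
  then show ?thesis
    unfolding filterlim_at_top_dense by (simp add: divide_inverse)
qed

lemma dominated_sum_neg:
  fixes a b k s t S u v :: real
  assumes "0 \<le> a" "0 \<le> u" "s < k" "0 < b" "v \<le> - 1 / 2" "0 < k" "2 * t < k" "4 * S / b < k"
  shows "- (a * (k - s) * u) + b * ((k - t) * v) + S < 0"
proof -
  have "a * (k - s) * u \<ge> 0"
    using assms(1-3) by simp
  moreover have "(k - t) * v \<le> (k - t) * (- 1 / 2)"
    using assms(5-7) by (intro mult_left_mono) auto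
  then have "b * ((k - t) * v) \<le> b * ((k - t) * (- 1 / 2))"
    by (rule mult_left_mono) (use assms(4) in simp)
  moreover have "b * ((k - t) * (- 1 / 2)) = b * t / 2 - b * k / 2"
    by (simp add: field_simps)
  moreover have "4 * S < b * k" "2 * (b * t) < b * k"
    using assms(4,7,8) by (simp_all add: field_simps)
  ultimately show ?thesis
    by linarith
qed

lemma dominated_sum_pos:
  fixes A b t v :: real
  assumes "0 < b" "v \<le> - 1 / 2" "t < - ((2 * \<bar>A\<bar> + 2) / b)"
  shows "0 < A + b * (t * v)"
proof -
  have "(2 * \<bar>A\<bar> + 2) / b > 0"
    using assms(1) by (simp add: add_nonneg_pos)
  then have "t < 0" "- (b * t) > 2 * \<bar>A\<bar> + 2"
    using assms(1,3) by (linarith, simp add: field_simps)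
  have "t * (- 1 / 2) \<le> t * v"
    using \<open>t < 0\<close> assms(2) by (intro mult_left_mono_neg) auto
  then have "b * (t * (- 1 / 2)) \<le> b * (t * v)"
    by (rule mult_left_mono) (use assms(1) in simp)
  then show ?thesis
    using \<open>- (b * t) > 2 * \<bar>A\<bar> + 2\<close> by simp
qed

context
  fixes d :: nat and R mp mm rhop rhom alpha SI :: real
  assumes d: "d \<ge> 2" and R: "R > 0" and mp: "mp > 0" and mm: "mm > 0"
    and rhop: "rhop > 0" and rhom: "rhom > 0" and alpha: "alpha > 0"
begin

lemma isCont_calH: "q > 0 \<Longrightarrow> isCont (calH d R mp mm rhop rhom alpha SI Sp Sm) q"
  unfolding calH_eq using mp mm rhop rhom R
  by (intro continuous_intros isCont_inner_ratio isCont_outer_ratio) auto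

lemma calH_neg_at_R: "\<exists>dp<0. \<forall>Sp Sm. Sp / rhop < dp \<longrightarrow> calH d R mp mm rhop rhom alpha SI Sp Sm R < 0"
proof -
  define A where "A = mp * sqrt (rhop / mp) * inner_ratio d (sqrt (rhop / mp)) R"
  have "A > 0"
    unfolding A_def using mp rhop R by (intro mult_pos_pos inner_ratio_pos) auto
  have "calH d R mp mm rhop rhom alpha SI Sp Sm R < 0" if "Sp / rhop < - (\<bar>SI\<bar> + 1) / A" for Sp Sm
  proof -
    define X where "X = alpha * (real d - 1) / R"
    have "A * (Sp / rhop) < - (\<bar>SI\<bar> + 1)"
      using that \<open>A > 0\<close> by (simp add: field_simps)
    moreover have "A * X > 0"
      unfolding X_def using \<open>A > 0\<close> alpha d R by simp
    moreover have "calH d R mp mm rhop rhom alpha SI Sp Sm R = - A * (X - Sp / rhop) + SI"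
      unfolding calH_eq A_def X_def using outer_ratio_at_R[of "sqrt (rhom / mm)" R d] mm rhom R
      by (simp add: mult_ac)
    ultimately show ?thesis
      by (simp add: algebra_simps)
  qed
  moreover have "- (\<bar>SI\<bar> + 1) / A < 0"
    using \<open>A > 0\<close> by (simp add: divide_neg_pos add_pos_nonneg)
  ultimately show ?thesis
    by blast
qed

lemma calH_eventually_neg_at_0: "eventually (\<lambda>q. calH d R mp mm rhop rhom alpha SI Sp Sm q < 0) (at_right 0)"
proof -
  define lp lm \<kappa> where "lp = sqrt (rhop / mp)" and "lm = sqrt (rhom / mm)"
    and "\<kappa> = alpha * (real d - 1)"
  have "lp > 0" "lm > 0" "\<kappa> > 0"
    unfolding lp_def lm_def \<kappa>_def using mp mm rhop rhom alpha d by auto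
  have "eventually (\<lambda>q. 0 < q \<and> outer_ratio d lm R q \<le> - 1 / 2 \<and> Sp / rhop < \<kappa> / q
      \<and> 2 * (Sm / rhom) < \<kappa> / q \<and> 4 * SI / (mm * lm) < \<kappa> / q) (at_right 0)"
    using eventually_at_right_less outer_ratio_eventually_le[OF \<open>lm > 0\<close> R]
      eventually_less_div_at_right_0[OF \<open>\<kappa> > 0\<close>]
    by (intro eventually_conj) auto
  then show ?thesis
  proof eventually_elim
    case (elim q)
    \<comment> \<open>the inner term is \<open>\<le> 0\<close> and the outer one is below \<open>- mm * lm * \<kappa> / (4 * q)\<close>\<close>
    have "- (mp * lp * (\<kappa> / q - Sp / rhop) * inner_ratio d lp q)
        + mm * lm * ((\<kappa> / q - Sm / rhom) * outer_ratio d lm R q) + SI < 0"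
      using elim mp mm \<open>lp > 0\<close> \<open>lm > 0\<close> \<open>\<kappa> > 0\<close> inner_ratio_pos[OF \<open>lp > 0\<close>, of q d]
      by (intro dominated_sum_neg) auto
    then show ?case
      unfolding calH_eq lp_def lm_def \<kappa>_def by (simp add: mult.assoc)
  qed
qed

lemma calH_pos_for_large_Sm:
  "\<exists>dm>0. \<forall>Sm. Sm / rhom > dm \<longrightarrow> (\<exists>p\<in>{0<..<R}. calH d R mp mm rhop rhom alpha SI Sp Sm p > 0)"
proof -
  define lp lm \<kappa> where "lp = sqrt (rhop / mp)" and "lm = sqrt (rhom / mm)"
    and "\<kappa> = alpha * (real d - 1)"
  have "lm > 0" "\<kappa> > 0"
    unfolding lm_def \<kappa>_def using mm rhom alpha d by auto
  have "eventually (\<lambda>q. q \<in> {0<..<R} \<and> outer_ratio d lm R q \<le> - 1 / 2) (at_right 0)"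
    using eventually_at_right_real[OF R] outer_ratio_eventually_le[OF \<open>lm > 0\<close> R]
    by eventually_elim auto
  then obtain p where p: "p \<in> {0<..<R}" and g: "outer_ratio d lm R p \<le> - 1 / 2"
    using eventually_happens'[OF trivial_limit_at_right_real] by auto
  define A where "A = - (mp * lp * (\<kappa> / p - Sp / rhop) * inner_ratio d lp p) + SI"
  define dm where "dm = \<kappa> / p + (2 * \<bar>A\<bar> + 2) / (mm * lm)"
  have "(2 * \<bar>A\<bar> + 2) / (mm * lm) > 0" "\<kappa> / p > 0"
    using mm \<open>lm > 0\<close> \<open>\<kappa> > 0\<close> p by (simp_all add: add_nonneg_pos)
  then have "dm > 0"
    unfolding dm_def by linarith
  moreover have "calH d R mp mm rhop rhom alpha SI Sp Sm p > 0" if "Sm / rhom > dm" for Sm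
  proof -
    have "A + mm * lm * ((\<kappa> / p - Sm / rhom) * outer_ratio d lm R p) > 0"
      using that mm \<open>lm > 0\<close> g unfolding dm_def by (intro dominated_sum_pos) auto
    then show ?thesis
      unfolding calH_eq A_def lp_def lm_def \<kappa>_def by (simp add: mult.assoc)
  qed
  ultimately show ?thesis
    using p by blast
qed

lemma calH_two_roots_for_large_Sm:
  assumes "\<And>Sm. calH d R mp mm rhop rhom alpha SI Sp Sm R < 0"
  shows "\<exists>dm>0. \<forall>Sm. Sm / rhom > dm \<longrightarrow>
    (let H = calH d R mp mm rhop rhom alpha SI Sp Sm; Z = {q \<in> {0<..<R}. H q = 0}
     in (\<exists>a\<in>Z. \<exists>b\<in>Z. a \<noteq> b)
        \<and> (\<exists>a\<in>Z. \<exists>b\<in>Z. a \<noteq> b \<and> ode_unstable H R a \<and> ode_stable H R b)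
        \<and> (card Z = 2 \<longrightarrow> (\<forall>a\<in>Z. \<forall>b\<in>Z. a < b \<longrightarrow> ode_unstable H R a \<and> ode_stable H R b)))"
proof -
  obtain dm where "dm > 0"
    and pos: "\<And>Sm. Sm / rhom > dm \<Longrightarrow> \<exists>p\<in>{0<..<R}. calH d R mp mm rhop rhom alpha SI Sp Sm p > 0"
    using calH_pos_for_large_Sm by blast
  show ?thesis
  proof (rule exI[of _ dm], intro conjI allI impI)
    show "dm > 0" by fact
  qed (unfold Let_def, rule roots_of_sign_pattern[OF isCont_calH calH_eventually_neg_at_0 pos assms])
qed

end

theorem lemma3p1:
  fixes d :: nat and R mp mm rhop rhom alpha SI :: real
  assumes "d \<in> {2, 3}" and "R > 0" and "mp > 0" and "mm > 0"
    and "rhop > 0" and "rhom > 0" and "alpha > 0"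
  shows "\<exists>dp < 0. \<forall>Sp. Sp / rhop < dp \<longrightarrow> (\<exists>dm > 0. \<forall>Sm. Sm / rhom > dm \<longrightarrow>
     (let H = calH d R mp mm rhop rhom alpha SI Sp Sm;
          Z = {q \<in> {0<..<R}. H q = 0}
      in (\<exists>a\<in>Z. \<exists>b\<in>Z. a \<noteq> b)
         \<and> (\<exists>a\<in>Z. \<exists>b\<in>Z. a \<noteq> b \<and> ode_unstable H R a \<and> ode_stable H R b)
         \<and> (card Z = 2 \<longrightarrow> (\<forall>a\<in>Z. \<forall>b\<in>Z. a < b \<longrightarrow> ode_unstable H R a \<and> ode_stable H R b))))"
proof -
  have "d \<ge> 2"
    using assms(1) by auto
  note params = this assms(2-7)
  obtain dp where "dp < 0"
    and neg_at_R: "\<And>Sp Sm. Sp / rhop < dp \<Longrightarrow> calH d R mp mm rhop rhom alpha SI Sp Sm R < 0"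
    using calH_neg_at_R[OF params] by blast
  show ?thesis
  proof (rule exI[of _ dp], intro conjI allI impI)
    show "dp < 0" by fact
  qed (rule calH_two_roots_for_large_Sm[OF params neg_at_R])
qed

end
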